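(* Let $A\in\mathbb{C}^{m\times m}$ be Hermitian positive semidefinite, let $B\in\mathbb{C}^{m\times k}$ be such that $B^*$ has full column rank (so $BB^*$ is positive definite), and let \[ H=\begin{bmatrix} A & B\\ B^* & 0\end{bmatrix}. \] Let $\alpha=\sup_{x\neq0}\dfrac{x^*Ax}{x^*\sqrt{BB^*}x}$ and $\beta_1=\min_{\|x\|=1}\|B^*x\|$. Then \[ \left(\frac{-2\beta_1}{\alpha+\sqrt{\alpha^2+4}},\ \beta_1\right)\setminus\{0\}\subseteq\rho(H). \]
   Context: $\rho(H)$ denotes the resolvent set of $H$ (the complement of its spectrum); $\sqrt{BB^*}$ is the positive definite square root. *)

theory Defs
  imports "HOL-Analysis.Analysis"
begin

definition adjoint_mat :: "complex^'n^'m \<Rightarrow> complex^'m^'n" where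
  "adjoint_mat A = (\<chi> i j. cnj (A $ j $ i))"

definition qform :: "complex^'n^'n \<Rightarrow> complex^'n \<Rightarrow> complex" where
  "qform A x = (\<Sum>i\<in>UNIV. \<Sum>j\<in>UNIV. cnj (x $ i) * A $ i $ j * x $ j)"

definition hermitian_mat :: "complex^'n^'n \<Rightarrow> bool" where
  "hermitian_mat A \<longleftrightarrow> adjoint_mat A = A"

definition psd_mat :: "complex^'n^'n \<Rightarrow> bool" where
  "psd_mat A \<longleftrightarrow> hermitian_mat A \<and> (\<forall>x. 0 \<le> Re (qform A x))"

definition pd_mat :: "complex^'n^'n \<Rightarrow> bool" where
  "pd_mat A \<longleftrightarrow> hermitian_mat A \<and> (\<forall>x. x \<noteq> 0 \<longrightarrow> 0 < Re (qform A x))"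

definition pd_sqrt :: "complex^'n^'n \<Rightarrow> complex^'n^'n" where
  "pd_sqrt P = (THE S. pd_mat S \<and> S ** S = P)"

definition block_mat :: "complex^'m^'m \<Rightarrow> complex^'k^'m \<Rightarrow> complex^'m^'k \<Rightarrow> complex^'k^'k
    \<Rightarrow> complex^('m + 'k)^('m + 'k)" where
  "block_mat A B C D = (\<chi> i j. case i of
      Inl a \<Rightarrow> (case j of Inl b \<Rightarrow> A $ a $ b | Inr b \<Rightarrow> B $ a $ b)
    | Inr a \<Rightarrow> (case j of Inl b \<Rightarrow> C $ a $ b | Inr b \<Rightarrow> D $ a $ b))"

definition resolvent_set :: "complex^'n^'n \<Rightarrow> complex set" where
  "resolvent_set H = {z. invertible (H - mat z)}"

end

theory Submission
  imports Defs
begin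

text \<open>Let \<open>(x, y)\<close> be an eigenvector of \<open>H\<close> for a real eigenvalue \<open>\<lambda> \<noteq> 0\<close>, so
  \<open>A x + B y = \<lambda> x\<close> and \<open>B\<^sup>* x = \<lambda> y\<close>; then \<open>x \<noteq> 0\<close>, for otherwise also \<open>y = 0\<close>.
  Pairing the first equation with \<open>x\<close> gives
  \<open>x\<^sup>*A x + \<lambda> \<parallel>y\<parallel>\<^sup>2 = \<lambda> \<parallel>x\<parallel>\<^sup>2\<close>, and \<open>\<beta>\<^sub>1 \<parallel>x\<parallel> \<le> \<parallel>B\<^sup>* x\<parallel> = |\<lambda>| \<parallel>y\<parallel>\<close>.
  If \<open>\<lambda> > 0\<close>, positivity of \<open>A\<close> forces \<open>\<parallel>y\<parallel> \<le> \<parallel>x\<parallel>\<close>, hence \<open>\<beta>\<^sub>1 \<le> \<lambda>\<close>.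
  If \<open>\<lambda> < 0\<close>, put \<open>S = \<surd>(B B\<^sup>*)\<close>: then \<open>\<parallel>S x\<parallel> = \<parallel>B\<^sup>* x\<parallel>\<close> and
  \<open>x\<^sup>*A x \<le> \<alpha> x\<^sup>*S x \<le> \<alpha> \<parallel>x\<parallel> \<parallel>S x\<parallel>\<close>, which turns the energy identity into
  \<open>\<parallel>y\<parallel>\<^sup>2 \<le> \<alpha> \<parallel>x\<parallel> \<parallel>y\<parallel> + \<parallel>x\<parallel>\<^sup>2\<close>, i.e. \<open>2 \<parallel>y\<parallel> \<le> (\<alpha> + \<surd>(\<alpha>\<^sup>2 + 4)) \<parallel>x\<parallel>\<close>, and so
  \<open>\<lambda> \<le> -2 \<beta>\<^sub>1 / (\<alpha> + \<surd>(\<alpha>\<^sup>2 + 4))\<close>.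
  That \<open>\<surd>(B B\<^sup>*)\<close> is well defined needs the spectral theorem for Hermitian matrices, obtained
  here by repeatedly maximising the Rayleigh quotient on orthogonal complements.\<close>

definition cinner :: "complex^'n \<Rightarrow> complex^'n \<Rightarrow> complex" where
  "cinner x y = (\<Sum>i\<in>UNIV. cnj (x$i) * y$i)"

lemma qform_cinner: "qform A x = cinner x (A *v x)"
  unfolding qform_def cinner_def matrix_vector_mult_def
  by (simp add: sum_distrib_left mult.assoc)

lemma cinner_matrix_vector_left: "cinner (M *v x) y = cinner x (adjoint_mat M *v y)"
proof -
  have "cinner (M *v x) y = (\<Sum>i\<in>UNIV. \<Sum>j\<in>UNIV. cnj (M$i$j) * cnj (x$j) * y$i)"
    unfolding cinner_def matrix_vector_mult_def by (simp add: sum_distrib_right)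
  also have "\<dots> = (\<Sum>j\<in>UNIV. \<Sum>i\<in>UNIV. cnj (M$i$j) * cnj (x$j) * y$i)"
    by (rule sum.swap)
  also have "\<dots> = cinner x (adjoint_mat M *v y)"
    unfolding cinner_def matrix_vector_mult_def adjoint_mat_def
    by (simp add: sum_distrib_left mult_ac)
  finally show ?thesis .
qed

lemma adjoint_mat_adjoint_mat [simp]: "adjoint_mat (adjoint_mat M) = M"
  by (simp add: adjoint_mat_def vec_eq_iff)

lemma cinner_matrix_vector_right: "cinner x (M *v y) = cinner (adjoint_mat M *v x) y"
  using cinner_matrix_vector_left[of "adjoint_mat M" x y] by simp

lemma cinner_add_right: "cinner x (y + z) = cinner x y + cinner x z"
  unfolding cinner_def by (simp add: distrib_left sum.distrib)

lemma cinner_diff_right: "cinner x (y - z) = cinner x y - cinner x z"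
  unfolding cinner_def by (simp add: right_diff_distrib sum_subtractf)

lemma cinner_add_left: "cinner (x + y) z = cinner x z + cinner y z"
  unfolding cinner_def by (simp add: distrib_right sum.distrib)

lemma cinner_scale_right: "cinner x (c *s y) = c * cinner x y"
  unfolding cinner_def by (simp add: sum_distrib_left mult_ac)

lemma cinner_scale_left: "cinner (c *s x) y = cnj c * cinner x y"
  unfolding cinner_def by (simp add: sum_distrib_left mult_ac)

lemma cinner_zero_right [simp]: "cinner x 0 = 0"
  unfolding cinner_def by simp

lemma cinner_commute: "cinner y x = cnj (cinner x y)"
  unfolding cinner_def by (simp add: mult_ac)

lemma cinner_sum_right: "cinner x (\<Sum>e\<in>E. f e) = (\<Sum>e\<in>E. cinner x (f e))"
  unfolding cinner_def by (simp add: sum_distrib_left sum.swap[of _ E UNIV])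

lemma Re_cinner: "Re (cinner x y) = inner x y"
  unfolding cinner_def inner_vec_def inner_complex_def by (simp add: Re_sum)

lemma cinner_self: "cinner x x = of_real (norm x ^ 2)"
proof (rule complex_eqI)
  show "Im (cinner x x) = Im (of_real (norm x ^ 2))"
    unfolding cinner_def by (simp add: Im_sum)
qed (simp add: Re_cinner power2_norm_eq_inner)

lemma scaleR_eq_vector_scalar_mult: "r *\<^sub>R (x :: complex^'n) = of_real r *s x"
  unfolding vec_eq_iff vector_scaleR_component vector_scalar_mult_def by (simp add: scaleR_conv_of_real)

lemma matrix_vector_mult_mat: "mat c *v x = c *s (x :: complex^'n)"
  by (simp add: vec_eq_iff matrix_vector_mult_def mat_def if_distrib if_distribR cong: if_cong)

lemma matrix_vector_mult_sum:
  fixes M :: "complex^'n^'m"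
  shows "M *v (\<Sum>e\<in>E. f e) = (\<Sum>e\<in>E. M *v f e)"
  by (simp add: vec_eq_iff matrix_vector_mult_def sum_component sum_distrib_left sum.swap[of _ E UNIV])

lemma qform_scaleR: "qform M (r *\<^sub>R x) = of_real (r^2) * qform M x"
  by (simp add: qform_cinner scaleR_eq_vector_scalar_mult vector_scalar_commute
      cinner_scale_left cinner_scale_right power2_eq_square)

lemma qform_diff: "qform (S - T) z = qform S z - qform T z"
  by (simp add: qform_cinner matrix_vector_mult_diff_rdistrib cinner_diff_right)

lemma continuous_on_Re_qform: "continuous_on S (\<lambda>x. Re (qform M x))"
  unfolding qform_def by (intro continuous_intros)

lemma hermitian_cinner: "hermitian_mat M \<Longrightarrow> cinner (M *v x) y = cinner x (M *v y)"
  by (simp add: cinner_matrix_vector_left hermitian_mat_def)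

lemma hermitian_mat_diff: "hermitian_mat S \<Longrightarrow> hermitian_mat T \<Longrightarrow> hermitian_mat (S - T)"
  by (simp add: hermitian_mat_def adjoint_mat_def vec_eq_iff)

lemma hermitian_mat_of_real: "hermitian_mat (mat (of_real r))"
  by (simp add: hermitian_mat_def adjoint_mat_def mat_def vec_eq_iff)

text \<open>Since \<open>x\<^sup>*M x = 0\<close>, the form is affine in \<open>t\<close> along the line, and a nonnegative affine
  function is constant.\<close>
lemma hermitian_qform_nonneg_on_line:
  fixes M :: "complex^'n^'n"
  assumes herm: "hermitian_mat M"
    and nonneg: "\<And>t::real. 0 \<le> Re (qform M (y + of_real t *s x))"
    and zero: "Re (qform M x) = 0"
  shows "Re (cinner y (M *v x)) = 0"
proof (rule ccontr)
  define a where "a = Re (cinner y (M *v x))"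
  assume "Re (cinner y (M *v x)) \<noteq> 0"
  then have a0: "a \<noteq> 0" by (simp add: a_def)
  have line: "Re (qform M (y + of_real t *s x)) = Re (qform M y) + 2 * t * a" for t :: real
  proof -
    have "cinner x (M *v y) = cnj (cinner y (M *v x))"
      using hermitian_cinner[OF herm] by (metis cinner_commute)
    moreover have "qform M (y + of_real t *s x) = qform M y + of_real t * cinner y (M *v x)
        + of_real t * cinner x (M *v y) + of_real t * of_real t * qform M x"
      by (simp add: qform_cinner matrix_vector_right_distrib vector_scalar_commute
          cinner_add_left cinner_add_right cinner_scale_left cinner_scale_right algebra_simps)
    ultimately show ?thesis using zero by (simp add: a_def)
  qed
  define t where "t = - (\<bar>Re (qform M y)\<bar> + 1) / (2 * a)"
  have "2 * t * a = - (\<bar>Re (qform M y)\<bar> + 1)" using a0 by (simp add: t_def)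
  then have "Re (qform M (y + of_real t *s x)) < 0" by (simp add: line)
  with nonneg show False by (meson not_le)
qed

definition orthogonal_compl :: "(complex^'n) set \<Rightarrow> (complex^'n) set" where
  "orthogonal_compl E = {x. \<forall>e\<in>E. cinner e x = 0}"

lemma orthogonal_compl_add: "x \<in> orthogonal_compl E \<Longrightarrow> y \<in> orthogonal_compl E \<Longrightarrow> x + y \<in> orthogonal_compl E"
  by (simp add: orthogonal_compl_def cinner_add_right)

lemma orthogonal_compl_scale: "x \<in> orthogonal_compl E \<Longrightarrow> c *s x \<in> orthogonal_compl E"
  by (simp add: orthogonal_compl_def cinner_scale_right)

lemma closed_orthogonal_compl: "closed (orthogonal_compl E)"
proof -
  have "closed {x::complex^'n. cinner e x = 0}" for e
    unfolding cinner_def by (intro closed_Collect_eq continuous_intros)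
  then show ?thesis
    by (auto simp: orthogonal_compl_def Collect_ball_eq intro!: closed_INT)
qed

lemma qform_attains_max_on_orthogonal_compl:
  fixes P :: "complex^'n^'n"
  assumes "x \<in> orthogonal_compl E" "x \<noteq> 0"
  shows "\<exists>v \<in> orthogonal_compl E. norm v = 1 \<and>
     (\<forall>z \<in> orthogonal_compl E. Re (qform P z) \<le> Re (qform P v) * norm z ^ 2)"
proof -
  define K where "K = orthogonal_compl E \<inter> sphere 0 1"
  have normalize: "z /\<^sub>R norm z \<in> K" if "z \<in> orthogonal_compl E" "z \<noteq> 0" for z
  proof -
    have "z /\<^sub>R norm z \<in> orthogonal_compl E"
      using that orthogonal_compl_scale by (simp add: scaleR_eq_vector_scalar_mult)
    with that show ?thesis by (simp add: K_def)
  qed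
  have "compact K"
    unfolding K_def by (intro closed_Int_compact closed_orthogonal_compl compact_sphere)
  moreover have "K \<noteq> {}" using normalize assms by blast
  ultimately obtain v where vK: "v \<in> K" and vmax: "\<forall>y\<in>K. Re (qform P y) \<le> Re (qform P v)"
    using continuous_attains_sup[OF _ _ continuous_on_Re_qform] by blast
  have "Re (qform P z) \<le> Re (qform P v) * norm z ^ 2" if "z \<in> orthogonal_compl E" for z
  proof (cases "z = 0")
    case False
    have "Re (qform P (z /\<^sub>R norm z)) \<le> Re (qform P v)"
      using vmax normalize[OF that False] by blast
    with False show ?thesis by (simp add: qform_scaleR field_simps)
  qed (simp add: qform_cinner)
  then show ?thesis using vK by (auto simp: K_def)
qed

text \<open>A maximiser \<open>v\<close> of the Rayleigh quotient on the orthogonal complement of a set of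
  eigenvectors is an eigenvector: \<open>l I - P\<close> is positive semidefinite on that complement, which
  contains \<open>(l I - P) v\<close>, and annihilates \<open>v\<close> in the quadratic form.\<close>
lemma hermitian_eigenvector_in_orthogonal_compl:
  fixes P :: "complex^'n^'n"
  assumes herm: "hermitian_mat P"
    and eig: "\<forall>e\<in>E. \<exists>l::real. P *v e = of_real l *s e"
    and "x \<in> orthogonal_compl E" "x \<noteq> 0"
  shows "\<exists>v \<in> orthogonal_compl E. norm v = 1 \<and> (\<exists>l::real. P *v v = of_real l *s v)"
proof -
  obtain v where vW: "v \<in> orthogonal_compl E" and nv: "norm v = 1"
    and vmax: "\<forall>z \<in> orthogonal_compl E. Re (qform P z) \<le> Re (qform P v) * norm z ^ 2"
    using qform_attains_max_on_orthogonal_compl assms(3,4) by blast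
  define l where "l = Re (qform P v)"
  define M where "M = mat (of_real l) - P"
  have hermM: "hermitian_mat M"
    unfolding M_def by (intro hermitian_mat_diff hermitian_mat_of_real herm)
  have qM: "Re (qform M z) = l * norm z ^ 2 - Re (qform P z)" for z
    unfolding M_def qform_diff
    by (simp add: qform_cinner matrix_vector_mult_mat cinner_scale_right cinner_self)
  have "cinner e (M *v v) = 0" if e: "e \<in> E" for e
  proof -
    obtain le :: real where "P *v e = of_real le *s e" using eig e by blast
    moreover have "cinner e v = 0" using vW e by (simp add: orthogonal_compl_def)
    ultimately show ?thesis
      by (simp add: M_def matrix_vector_mult_diff_rdistrib matrix_vector_mult_mat cinner_diff_right
          cinner_scale_right cinner_scale_left flip: hermitian_cinner[OF herm])
  qed
  then have MvW: "M *v v \<in> orthogonal_compl E" by (simp add: orthogonal_compl_def)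
  have "Re (cinner (M *v v) (M *v v)) = 0"
  proof (rule hermitian_qform_nonneg_on_line[OF hermM])
    fix t :: real
    have "M *v v + of_real t *s v \<in> orthogonal_compl E"
      using MvW vW by (intro orthogonal_compl_add orthogonal_compl_scale)
    then show "0 \<le> Re (qform M (M *v v + of_real t *s v))" using vmax by (simp add: qM l_def)
  qed (simp add: qM nv l_def)
  then have "M *v v = 0" by (simp add: cinner_self)
  then have "P *v v = of_real l *s v"
    by (simp add: M_def matrix_vector_mult_diff_rdistrib matrix_vector_mult_mat)
  with vW nv show ?thesis by blast
qed

definition orthonormal_eigenvectors :: "complex^'n^'n \<Rightarrow> (complex^'n) set \<Rightarrow> bool" where
  "orthonormal_eigenvectors P E \<longleftrightarrow> finite E
     \<and> (\<forall>e\<in>E. norm e = 1 \<and> (\<exists>l::real. P *v e = of_real l *s e))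
     \<and> (\<forall>e\<in>E. \<forall>f\<in>E. e \<noteq> f \<longrightarrow> cinner e f = 0)"

lemma orthonormal_eigenvectors_card:
  fixes P :: "complex^'n^'n"
  assumes "orthonormal_eigenvectors P E"
  shows "card E \<le> DIM(complex^'n)"
proof -
  have "pairwise orthogonal E"
    using assms unfolding orthonormal_eigenvectors_def pairwise_def orthogonal_def
    by (metis Re_cinner zero_complex.sel(1))
  moreover have "0 \<notin> E" using assms unfolding orthonormal_eigenvectors_def by force
  ultimately have "independent E" by (rule pairwise_orthogonal_independent)
  then show ?thesis using independent_bound by blast
qed

lemma orthonormal_eigenvectors_cinner_sum:
  assumes "orthonormal_eigenvectors P E" "f \<in> E"
  shows "cinner f (\<Sum>e\<in>E. c e *s e) = c f"
proof -
  have "cinner f e = (if e = f then 1 else 0)" if "e \<in> E" for e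
    using assms that by (simp add: orthonormal_eigenvectors_def cinner_self)
  then have "cinner f (\<Sum>e\<in>E. c e *s e) = (\<Sum>e\<in>E. if e = f then c f else 0)"
    unfolding cinner_sum_right cinner_scale_right by (intro sum.cong) auto
  also have "\<dots> = c f" using assms by (simp add: orthonormal_eigenvectors_def)
  finally show ?thesis .
qed

text \<open>A maximal orthonormal family of eigenvectors spans: otherwise the residual of some \<open>x\<close>
  lies in its orthogonal complement, which then contains a further eigenvector.\<close>
lemma hermitian_orthonormal_eigenbasis:
  fixes P :: "complex^'n^'n"
  assumes herm: "hermitian_mat P"
  shows "\<exists>E. orthonormal_eigenvectors P E \<and> (\<forall>x. x = (\<Sum>e\<in>E. cinner e x *s e))"
proof -
  have "orthonormal_eigenvectors P {}" by (simp add: orthonormal_eigenvectors_def)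
  moreover have "\<forall>F. orthonormal_eigenvectors P F \<longrightarrow> card F < Suc DIM(complex^'n)"
    using orthonormal_eigenvectors_card[of P] by (simp add: less_Suc_eq_le)
  ultimately obtain E where onE: "orthonormal_eigenvectors P E"
    and maximal: "\<forall>F. orthonormal_eigenvectors P F \<longrightarrow> card F \<le> card E"
    using ex_has_greatest_nat[of "orthonormal_eigenvectors P" "{}" card] by blast
  have fin: "finite E" using onE by (simp add: orthonormal_eigenvectors_def)
  have "x = (\<Sum>e\<in>E. cinner e x *s e)" for x
  proof (rule ccontr)
    define r where "r = x - (\<Sum>e\<in>E. cinner e x *s e)"
    assume "x \<noteq> (\<Sum>e\<in>E. cinner e x *s e)"
    then have "r \<noteq> 0" by (simp add: r_def)
    moreover have "r \<in> orthogonal_compl E"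
      using orthonormal_eigenvectors_cinner_sum[OF onE]
      by (simp add: orthogonal_compl_def r_def cinner_diff_right)
    moreover have "\<forall>e\<in>E. \<exists>l::real. P *v e = of_real l *s e"
      using onE by (simp add: orthonormal_eigenvectors_def)
    ultimately obtain v l where vW: "v \<in> orthogonal_compl E" and nv: "norm v = 1"
      and Pv: "P *v v = of_real l *s v"
      using hermitian_eigenvector_in_orthogonal_compl[OF herm] by blast
    have vE: "v \<notin> E"
    proof
      assume "v \<in> E"
      then have "cinner v v = 0" using vW by (simp add: orthogonal_compl_def)
      with nv show False by (simp add: cinner_self)
    qed
    have "cinner e v = 0" "cinner v e = 0" if "e \<in> E" for e
      using vW that cinner_commute[of v e] by (simp_all add: orthogonal_compl_def)
    then have "orthonormal_eigenvectors P (insert v E)"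
      using onE nv Pv unfolding orthonormal_eigenvectors_def by blast
    then have "card (insert v E) \<le> card E" using maximal by blast
    with fin vE show False by simp
  qed
  with onE show ?thesis by blast
qed

definition spectral_mat :: "(complex^'n) set \<Rightarrow> (complex^'n \<Rightarrow> real) \<Rightarrow> complex^'n^'n" where
  "spectral_mat E w = (\<chi> i j. \<Sum>e\<in>E. of_real (w e) * e$i * cnj (e$j))"

lemma spectral_mat_mult_vec:
  "spectral_mat E w *v x = (\<Sum>e\<in>E. (of_real (w e) * cinner e x) *s e)"
proof -
  have "(spectral_mat E w *v x) $ i = (\<Sum>e\<in>E. \<Sum>j\<in>UNIV. of_real (w e) * e$i * cnj (e$j) * x$j)" for i
    unfolding spectral_mat_def matrix_vector_mult_def by (simp add: sum_distrib_right sum.swap[of _ E])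
  then show ?thesis
    by (simp add: vec_eq_iff sum_component cinner_def sum_distrib_left mult_ac)
qed

lemma hermitian_spectral_mat: "hermitian_mat (spectral_mat E w)"
  by (simp add: hermitian_mat_def adjoint_mat_def spectral_mat_def vec_eq_iff mult_ac)

lemma qform_spectral_mat:
  "Re (qform (spectral_mat E w) x) = (\<Sum>e\<in>E. w e * (cmod (cinner e x))^2)"
proof -
  have "cinner x (of_real (w e) * cinner e x *s e) = of_real (w e * (cmod (cinner e x))^2)" for e
    using complex_norm_square[of "cinner e x"]
    by (simp add: cinner_scale_right cinner_commute[of x e] mult_ac)
  then show ?thesis by (simp add: qform_cinner spectral_mat_mult_vec cinner_sum_right Re_sum)
qed

lemma cinner_spectral_mat:
  assumes "orthonormal_eigenvectors P E" "f \<in> E"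
  shows "cinner f (spectral_mat E w *v x) = of_real (w f) * cinner f x"
  unfolding spectral_mat_mult_vec by (rule orthonormal_eigenvectors_cinner_sum[OF assms])

text \<open>The square root is \<open>\<Sum>\<^sub>e \<surd>\<lambda>\<^sub>e e e\<^sup>*\<close> over an orthonormal eigenbasis.\<close>
lemma pd_mat_sqrt_exists:
  fixes P :: "complex^'n^'n"
  assumes pd: "pd_mat P"
  shows "\<exists>S. pd_mat S \<and> S ** S = P"
proof -
  obtain E where onE: "orthonormal_eigenvectors P E"
    and expand: "\<And>x. x = (\<Sum>e\<in>E. cinner e x *s e)"
    using hermitian_orthonormal_eigenbasis pd by (metis pd_mat_def)
  obtain l where Pe: "\<And>e. e \<in> E \<Longrightarrow> P *v e = of_real (l e) *s e"
    using onE unfolding orthonormal_eigenvectors_def by metis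
  have l_pos: "0 < l e" if e: "e \<in> E" for e
  proof -
    have "norm e = 1" using onE e by (simp add: orthonormal_eigenvectors_def)
    then have "e \<noteq> 0" by auto
    then have "0 < Re (qform P e)" using pd by (simp add: pd_mat_def)
    moreover have "qform P e = of_real (l e)"
      using \<open>norm e = 1\<close> by (simp add: qform_cinner Pe[OF e] cinner_scale_right cinner_self)
    ultimately show ?thesis by simp
  qed
  define S where "S = spectral_mat E (\<lambda>e. sqrt (l e))"
  have "S *v (S *v x) = P *v x" for x
  proof -
    have "S *v (S *v x) = (\<Sum>e\<in>E. cinner e x *s (of_real (l e) *s e))"
      unfolding S_def spectral_mat_mult_vec[of E _ "spectral_mat E _ *v x"]
      by (intro sum.cong) (simp_all add: cinner_spectral_mat[OF onE] vector_smult_assoc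
          mult_ac abs_of_pos l_pos flip: of_real_mult)
    also have "\<dots> = P *v x"
      by (subst (2) expand) (simp add: matrix_vector_mult_sum vector_scalar_commute Pe)
    finally show ?thesis .
  qed
  then have "S ** S = P" by (simp add: matrix_eq matrix_vector_mul_assoc)
  moreover have "0 < Re (qform S x)" if x0: "x \<noteq> 0" for x
  proof -
    have "\<exists>e\<in>E. cinner e x \<noteq> 0"
    proof (rule ccontr)
      assume "\<not> ?thesis"
      then have "(\<Sum>e\<in>E. cinner e x *s e) = 0" by simp
      with expand[of x] x0 show False by simp
    qed
    then obtain e where e: "e \<in> E" and "cinner e x \<noteq> 0" by blast
    then have "0 < sqrt (l e) * (cmod (cinner e x))^2" using l_pos by simp
    also have "\<dots> \<le> (\<Sum>e\<in>E. sqrt (l e) * (cmod (cinner e x))^2)"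
      using onE e l_pos
      by (intro member_le_sum) (simp_all add: orthonormal_eigenvectors_def less_imp_le)
    finally show ?thesis by (simp add: S_def qform_spectral_mat)
  qed
  ultimately show ?thesis
    by (metis S_def hermitian_spectral_mat pd_mat_def)
qed

text \<open>On an eigenvector \<open>v\<close> of \<open>D = S - T\<close> with eigenvalue \<open>l\<close>, the identity
  \<open>S\<^sup>2 - T\<^sup>2 = S D + D T\<close> gives \<open>l (v\<^sup>*S v + v\<^sup>*T v) = 0\<close>, so \<open>l = 0\<close>.\<close>
lemma pd_mat_sqrt_unique:
  fixes S T :: "complex^'n^'n"
  assumes pdS: "pd_mat S" and pdT: "pd_mat T" and eq: "S ** S = T ** T"
  shows "S = T"
proof -
  define D where "D = S - T"
  have hermD: "hermitian_mat D"
    using pdS pdT unfolding D_def pd_mat_def by (blast intro: hermitian_mat_diff)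
  obtain E where onE: "orthonormal_eigenvectors D E"
    and expand: "\<And>x. x = (\<Sum>e\<in>E. cinner e x *s e)"
    using hermitian_orthonormal_eigenbasis[OF hermD] by blast
  have "D *v v = 0" if v: "v \<in> E" for v
  proof -
    obtain l :: real where Dv: "D *v v = of_real l *s v"
      using onE v unfolding orthonormal_eigenvectors_def by blast
    have "v \<noteq> 0" using onE v by (auto simp: orthonormal_eigenvectors_def)
    then have pos: "0 < Re (qform S v) + Re (qform T v)"
      using pdS pdT by (simp add: pd_mat_def add_pos_pos)
    have "S *v (S *v v) - T *v (T *v v) = S *v (D *v v) + D *v (T *v v)"
      by (simp add: D_def matrix_vector_mult_diff_rdistrib matrix_vector_mult_diff_distrib)
    moreover have "S *v (S *v v) = T *v (T *v v)" using eq by (simp add: matrix_vector_mul_assoc)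
    ultimately have "0 = cinner v (S *v (D *v v)) + cinner (D *v v) (T *v v)"
      by (simp add: hermitian_cinner[OF hermD] flip: cinner_add_right)
    also have "\<dots> = of_real l * (qform S v + qform T v)"
      by (simp add: Dv vector_scalar_commute cinner_scale_left cinner_scale_right qform_cinner algebra_simps)
    finally have "Re (of_real l * (qform S v + qform T v)) = 0"
      by (metis zero_complex.sel(1))
    with pos have "l = 0" by simp
    then show ?thesis by (simp add: Dv)
  qed
  then have "D *v x = 0" for x
    by (subst expand) (simp add: matrix_vector_mult_sum vector_scalar_commute)
  then show ?thesis by (simp add: D_def matrix_eq matrix_vector_mult_diff_rdistrib)
qed

lemma pd_sqrt_correct:
  fixes P :: "complex^'n^'n"
  assumes "pd_mat P"
  shows "pd_mat (pd_sqrt P)" and "pd_sqrt P ** pd_sqrt P = P"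
proof -
  have "\<exists>!S. pd_mat S \<and> S ** S = P"
    using pd_mat_sqrt_exists[OF assms] pd_mat_sqrt_unique by metis
  then have "pd_mat (pd_sqrt P) \<and> pd_sqrt P ** pd_sqrt P = P"
    unfolding pd_sqrt_def by (rule theI')
  then show "pd_mat (pd_sqrt P)" "pd_sqrt P ** pd_sqrt P = P" by simp_all
qed

lemma quadratic_le_imp_le_root:
  fixes s t alpha :: real
  assumes "0 \<le> s" and "t^2 \<le> alpha * s * t + s^2"
  shows "2 * t \<le> (alpha + sqrt (alpha^2 + 4)) * s"
proof (rule ccontr)
  define r where "r = sqrt (alpha^2 + 4)"
  assume "\<not> ?thesis"
  then have "r * s < 2 * t - alpha * s" by (simp add: r_def algebra_simps)
  moreover have "0 \<le> r * s" using assms by (simp add: r_def)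
  ultimately have "(r * s)^2 < (2 * t - alpha * s)^2" by (simp add: power_strict_mono)
  then have "(alpha^2 + 4) * s^2 < (2 * t - alpha * s)^2" by (simp add: power_mult_distrib r_def)
  with assms show False by (simp add: power2_eq_square algebra_simps)
qed

text \<open>In the next two lemmas \<open>a\<close>, \<open>nx\<close> and \<open>ny\<close> stand for \<open>x\<^sup>*A x\<close>, \<open>\<parallel>x\<parallel>\<close> and \<open>\<parallel>y\<parallel>\<close>,
  where \<open>(x, y)\<close> is an eigenvector of \<open>H\<close> with eigenvalue \<open>lam\<close>.\<close>
lemma positive_eigenvalue_bound:
  fixes a lam beta nx ny :: real
  assumes "0 \<le> a" "a + lam * ny^2 = lam * nx^2" "beta * nx \<le> lam * ny"
    and "0 < lam" "0 < nx"
  shows "beta \<le> lam"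
proof -
  have "lam * ny^2 \<le> lam * nx^2" using assms(1,2) by linarith
  then have "ny^2 \<le> nx^2" using \<open>0 < lam\<close> by simp
  then have "ny \<le> nx" using \<open>0 < nx\<close> power2_le_imp_le by fastforce
  then have "beta * nx \<le> lam * nx" using assms by (meson mult_left_mono less_imp_le order_trans)
  with \<open>0 < nx\<close> show ?thesis by simp
qed

lemma negative_eigenvalue_bound:
  fixes a lam alpha beta nx ny :: real
  assumes "a + lam * ny^2 = lam * nx^2" "a \<le> alpha * nx * (- lam * ny)" "beta * nx \<le> - lam * ny"
    and "lam < 0" "0 < nx"
  shows "lam \<le> - 2 * beta / (alpha + sqrt (alpha^2 + 4))"
proof -
  define r where "r = sqrt (alpha^2 + 4)"
  have "\<bar>alpha\<bar> < r"
    unfolding r_def by (rule real_less_rsqrt) simp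
  then have r_pos: "0 < alpha + r" by linarith
  have "- lam * (ny^2 - alpha * nx * ny - nx^2) \<le> 0"
    using assms(1,2) by (simp add: algebra_simps)
  then have "ny^2 \<le> alpha * nx * ny + nx^2"
    using \<open>lam < 0\<close> by (simp add: zero_le_mult_iff)
  then have "2 * ny \<le> (alpha + r) * nx"
    unfolding r_def using \<open>0 < nx\<close> by (intro quadratic_le_imp_le_root) auto
  then have "- lam * (2 * ny) \<le> - lam * ((alpha + r) * nx)"
    using \<open>lam < 0\<close> by (intro mult_left_mono) simp_all
  then have "2 * beta * nx \<le> - lam * (alpha + r) * nx"
    using assms(3) by (simp add: algebra_simps)
  then have "2 * beta \<le> - lam * (alpha + r)"
    using \<open>0 < nx\<close> by (metis mult_minus_left mult_right_le_imp_le)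
  then have "lam \<le> - 2 * beta / (alpha + r)"
    by (subst pos_le_divide_eq[OF r_pos]) linarith
  then show ?thesis by (simp add: r_def)
qed

definition upper_part :: "'a^('m::finite + 'k::finite) \<Rightarrow> 'a^'m" where
  "upper_part z = (\<chi> i. z $ Inl i)"

definition lower_part :: "'a^('m::finite + 'k::finite) \<Rightarrow> 'a^'k" where
  "lower_part z = (\<chi> i. z $ Inr i)"

lemma vec_eq_0_iff_parts: "z = 0 \<longleftrightarrow> upper_part z = 0 \<and> lower_part z = 0"
proof
  assume "upper_part z = 0 \<and> lower_part z = 0"
  then have "z $ p = 0" for p by (cases p) (auto simp: upper_part_def lower_part_def vec_eq_iff)
  then show "z = 0" by (simp add: vec_eq_iff)
qed (simp add: upper_part_def lower_part_def vec_eq_iff)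

lemma block_mat_eigenvector:
  fixes z :: "complex^('m::finite + 'k::finite)"
  assumes "block_mat A B C D *v z = c *s z"
  shows "A *v upper_part z + B *v lower_part z = c *s upper_part z"
    and "C *v upper_part z + D *v lower_part z = c *s lower_part z"
proof -
  have sum_Plus: "(\<Sum>p\<in>UNIV. g p) = (\<Sum>i\<in>UNIV. g (Inl i)) + (\<Sum>j\<in>UNIV. g (Inr j))"
    for g :: "'m + 'k \<Rightarrow> complex"
    using sum.Plus[of "UNIV::'m set" "UNIV::'k set" g] by (simp add: o_def)
  have "(block_mat A B C D *v z) $ Inl i = (A *v upper_part z + B *v lower_part z) $ i"
    and "(block_mat A B C D *v z) $ Inr j = (C *v upper_part z + D *v lower_part z) $ j" for i j
    by (simp_all add: upper_part_def lower_part_def block_mat_def matrix_vector_mult_def sum_Plus)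
  with assms show "A *v upper_part z + B *v lower_part z = c *s upper_part z"
    and "C *v upper_part z + D *v lower_part z = c *s lower_part z"
    by (simp_all add: vec_eq_iff upper_part_def lower_part_def)
qed

lemma pd_mat_mult_adjoint_mat:
  fixes B :: "complex^'k^'m"
  assumes "\<forall>x. adjoint_mat B *v x = 0 \<longrightarrow> x = 0"
  shows "pd_mat (B ** adjoint_mat B)"
  unfolding pd_mat_def hermitian_mat_def
proof (intro conjI allI impI)
  show "adjoint_mat (B ** adjoint_mat B) = B ** adjoint_mat B"
    by (simp add: adjoint_mat_def vec_eq_iff matrix_matrix_mult_def mult_ac)
  fix x :: "complex^'m"
  assume "x \<noteq> 0"
  then have "adjoint_mat B *v x \<noteq> 0" using assms by blast
  then show "0 < Re (qform (B ** adjoint_mat B) x)"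
    by (simp add: qform_cinner cinner_self cinner_matrix_vector_right flip: matrix_vector_mul_assoc)
qed

lemma norm_sqrt_mult_vec:
  assumes "hermitian_mat S" "S ** S = B ** adjoint_mat B"
  shows "norm (S *v x) = norm (adjoint_mat B *v x)"
proof -
  have "cinner (S *v x) (S *v x) = cinner x ((S ** S) *v x)"
    using assms(1) by (simp add: hermitian_cinner matrix_vector_mul_assoc)
  also have "\<dots> = cinner (adjoint_mat B *v x) (adjoint_mat B *v x)"
    by (simp add: assms(2) cinner_matrix_vector_right flip: matrix_vector_mul_assoc)
  finally
  have "(norm (S *v x))^2 = (norm (adjoint_mat B *v x))^2"
    by (metis cinner_self of_real_eq_iff)
  then show ?thesis by (simp add: power2_eq_imp_eq)
qed

lemma Inf_norm_sphere_le:
  fixes M :: "complex^'n^'m"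
  shows "Inf {norm (M *v x) | x. norm x = 1} * norm x \<le> norm (M *v x)"
proof (cases "x = 0")
  case False
  have "Inf {norm (M *v x) | x. norm x = 1} \<le> norm (M *v (x /\<^sub>R norm x))"
    using False by (intro cInf_lower bdd_belowI[of _ 0]) auto
  also have "M *v (x /\<^sub>R norm x) = (M *v x) /\<^sub>R norm x"
    by (simp only: scaleR_eq_vector_scalar_mult vector_scalar_commute)
  also have "norm \<dots> = norm (M *v x) / norm x"
    by (simp add: divide_inverse_commute)
  finally show ?thesis using False by (simp add: pos_le_divide_eq)
qed simp

lemma bdd_above_qform_ratio:
  fixes A S :: "complex^'n^'n"
  assumes pdS: "pd_mat S"
  shows "bdd_above {Re (qform A x) / Re (qform S x) | x. x \<noteq> 0}"
proof -
  define f where "f x = Re (qform A x) / Re (qform S x)" for x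
  have "continuous_on (sphere 0 1) f"
    unfolding f_def
  proof (intro continuous_on_divide continuous_on_Re_qform ballI)
    fix u :: "complex^'n"
    assume "u \<in> sphere 0 1"
    then have "u \<noteq> 0" by auto
    then show "Re (qform S u) \<noteq> 0" using pdS unfolding pd_mat_def by (metis less_irrefl)
  qed
  then have "bdd_above (f ` sphere 0 1)"
    by (intro bounded_imp_bdd_above compact_imp_bounded compact_continuous_image compact_sphere)
  moreover have "{Re (qform A x) / Re (qform S x) | x. x \<noteq> 0} \<subseteq> f ` sphere 0 1"
  proof
    fix t
    assume "t \<in> {Re (qform A x) / Re (qform S x) | x. x \<noteq> 0}"
    then obtain x where "x \<noteq> 0" "t = f x" by (auto simp: f_def)
    then have "t = f (x /\<^sub>R norm x)" "x /\<^sub>R norm x \<in> sphere 0 1"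
      by (simp_all add: f_def qform_scaleR)
    then show "t \<in> f ` sphere 0 1" by blast
  qed
  ultimately show ?thesis by (rule bdd_above_mono)
qed

lemma qform_le_Sup_ratio:
  fixes A S :: "complex^'n^'n"
  assumes "pd_mat S"
  shows "Re (qform A x) \<le> Sup {Re (qform A x) / Re (qform S x) | x. x \<noteq> 0} * Re (qform S x)"
proof (cases "x = 0")
  case False
  then have "0 < Re (qform S x)" using assms by (simp add: pd_mat_def)
  moreover have "Re (qform A x) / Re (qform S x) \<le> Sup {Re (qform A x) / Re (qform S x) | x. x \<noteq> 0}"
    using False by (intro cSup_upper bdd_above_qform_ratio assms) auto
  ultimately show ?thesis by (simp add: pos_divide_le_eq)
qed (simp add: qform_cinner)

lemma qform_le_norm_mult_norm_adjoint_mat: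
  fixes A S :: "complex^'m^'m" and B :: "complex^'k^'m"
  assumes psdA: "psd_mat A" and pdS: "pd_mat S" and S_sq: "S ** S = B ** adjoint_mat B"
    and alpha: "\<And>x. Re (qform A x) \<le> alpha * Re (qform S x)"
  shows "Re (qform A x) \<le> alpha * norm x * norm (adjoint_mat B *v x)"
proof (cases "x = 0")
  case False
  have "0 < Re (qform S x)" using pdS False by (simp add: pd_mat_def)
  moreover have "0 \<le> Re (qform A x)" using psdA by (simp add: psd_mat_def)
  moreover from this have "0 \<le> alpha * Re (qform S x)" using alpha[of x] by linarith
  ultimately have "0 \<le> alpha" by (simp add: zero_le_mult_iff)
  have "Re (qform S x) \<le> norm x * norm (S *v x)"
    unfolding qform_cinner Re_cinner by (rule norm_cauchy_schwarz)
  also have "norm (S *v x) = norm (adjoint_mat B *v x)"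
    using pdS S_sq by (simp add: pd_mat_def norm_sqrt_mult_vec)
  finally have "alpha * Re (qform S x) \<le> alpha * (norm x * norm (adjoint_mat B *v x))"
    using \<open>0 \<le> alpha\<close> by (rule mult_left_mono)
  with alpha[of x] show ?thesis by (simp add: mult.assoc)
qed (simp add: qform_cinner)

lemma saddle_point_eigen_energy:
  assumes "A *v x + B *v y = of_real lam *s x" "adjoint_mat B *v x = of_real lam *s y"
  shows "Re (qform A x) + lam * (norm y)^2 = lam * (norm x)^2"
proof -
  have "cinner x (A *v x + B *v y) = cinner x (of_real lam *s x)" by (simp add: assms(1))
  then have "qform A x + of_real lam * cinner y y = of_real lam * cinner x x"
    by (simp add: cinner_add_right qform_cinner cinner_matrix_vector_right assms(2)
        cinner_scale_left cinner_scale_right)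
  then have "Re (qform A x + of_real lam * cinner y y) = Re (of_real lam * cinner x x)" by simp
  then show ?thesis by (simp add: cinner_self)
qed

lemma saddle_point_mat_eigenvector_eq_0:
  fixes A :: "complex^'m^'m" and B :: "complex^'k^'m"
  assumes psdA: "psd_mat A"
    and alpha: "\<And>x. Re (qform A x) \<le> alpha * norm x * norm (adjoint_mat B *v x)"
    and beta: "\<And>x. beta * norm x \<le> norm (adjoint_mat B *v x)"
    and lam_lower: "- 2 * beta / (alpha + sqrt (alpha\<^sup>2 + 4)) < lam"
    and lam_upper: "lam < beta" and "lam \<noteq> 0"
    and eigen: "block_mat A B (adjoint_mat B) 0 *v z = complex_of_real lam *s z"
  shows "z = 0"
proof -
  define x where "x = upper_part z"
  define y where "y = lower_part z"
  have eq_upper: "A *v x + B *v y = of_real lam *s x"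
    and eq_lower: "adjoint_mat B *v x = of_real lam *s y"
    using block_mat_eigenvector[OF eigen] by (simp_all add: x_def y_def)
  have "x = 0"
  proof (rule ccontr)
    assume "x \<noteq> 0"
    have "0 \<le> Re (qform A x)" using psdA by (simp add: psd_mat_def)
    note energy = saddle_point_eigen_energy[OF eq_upper eq_lower]
    have B_x: "norm (adjoint_mat B *v x) = \<bar>lam\<bar> * norm y"
      by (simp add: eq_lower flip: scaleR_eq_vector_scalar_mult)
    show False
    proof (cases "0 < lam")
      case True
      then have "beta \<le> lam"
        using \<open>x \<noteq> 0\<close> \<open>0 \<le> Re (qform A x)\<close> energy beta[of x] B_x
        by (intro positive_eigenvalue_bound[of "Re (qform A x)" lam "norm y" "norm x"]) simp_all
      with lam_upper show False by simp
    next
      case False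
      with \<open>lam \<noteq> 0\<close> have "lam < 0" by simp
      then have "lam \<le> - 2 * beta / (alpha + sqrt (alpha^2 + 4))"
        using \<open>x \<noteq> 0\<close> energy alpha[of x] beta[of x] B_x
        by (intro negative_eigenvalue_bound[of "Re (qform A x)" lam "norm y" "norm x"]) simp_all
      with lam_lower show False by simp
    qed
  qed
  moreover from this have "of_real lam *s y = 0" using eq_lower by simp
  then have "y = 0" using \<open>lam \<noteq> 0\<close> by (simp add: vec_eq_iff)
  ultimately show ?thesis by (simp add: vec_eq_0_iff_parts x_def y_def)
qed

theorem mainTheorem10:
  fixes A :: "complex^'m^'m" and B :: "complex^'k^'m" and lam alpha beta1 :: real
  assumes "psd_mat A"
    and "\<forall>x. adjoint_mat B *v x = 0 \<longrightarrow> x = 0"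
    and "alpha = Sup {Re (qform A x) / Re (qform (pd_sqrt (B ** adjoint_mat B)) x) | x. x \<noteq> 0}"
    and "beta1 = Inf {norm (adjoint_mat B *v x) | x. norm x = 1}"
    and "- 2 * beta1 / (alpha + sqrt (alpha\<^sup>2 + 4)) < lam" and "lam < beta1" and "lam \<noteq> 0"
  shows "complex_of_real lam \<in> resolvent_set (block_mat A B (adjoint_mat B) (0 :: complex^'k^'k))"
proof -
  let ?S = "pd_sqrt (B ** adjoint_mat B)"
  let ?H = "block_mat A B (adjoint_mat B) (0 :: complex^'k^'k) - mat (complex_of_real lam)"
  have pdBB: "pd_mat (B ** adjoint_mat B)" using assms(2) by (rule pd_mat_mult_adjoint_mat)
  have "z = 0" if "?H *v z = 0" for z
  proof (rule saddle_point_mat_eigenvector_eq_0)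
    have "Re (qform A x) \<le> alpha * Re (qform ?S x)" for x
      unfolding assms(3) by (rule qform_le_Sup_ratio) (rule pd_sqrt_correct[OF pdBB])
    then show "Re (qform A x) \<le> alpha * norm x * norm (adjoint_mat B *v x)" for x
      using assms(1) pd_sqrt_correct[OF pdBB] by (intro qform_le_norm_mult_norm_adjoint_mat)
    show "beta1 * norm x \<le> norm (adjoint_mat B *v x)" for x
      unfolding assms(4) by (rule Inf_norm_sphere_le)
    show "block_mat A B (adjoint_mat B) 0 *v z = complex_of_real lam *s z"
      using that by (simp add: matrix_vector_mult_diff_rdistrib matrix_vector_mult_mat)
  qed (use assms in simp_all)
  then have "invertible ?H"
    by (simp add: invertible_left_inverse matrix_left_invertible_ker)
  then show ?thesis by (simp add: resolvent_set_def)
qed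

end
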